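(* Suppose Assumption 2 holds with nonnegative functions $a,b$ on $\mathbb{X}$. For $N\ge1$ define \[ K_N(x_1)=\sum_{n=1}^N\frac1{(n-1)!}\int\mathrm{d}|\mu|(x_2)\cdots\int\mathrm{d}|\mu|(x_n)\prod_{i=1}^n e^{2b(x_i)}\sum_{G\in\mathcal{T}_n}\prod_{\{i,j\}\in G}|\zeta(x_i,x_j)| \] (the $n=1$ term being $e^{2b(x_1)}$). Then for every $N\ge1$ and almost all $x\in\mathbb{X}$, $K_N(x)\le e^{a(x)+2b(x)}$.
   Context: $(\mathbb{X},\mathcal{X},\mu)$ is a measure space with complex measure $\mu$ and total variation $|\mu|$; $\zeta$ is a complex measurable symmetric function on $\mathbb{X}\times\mathbb{X}$. $b$ is a nonnegative measurable function on $\mathbb{X}$. Assumption 2: $a$ is a nonnegative function on $\mathbb{X}$ such that $\int\mathrm{d}|\mu|(y)\,|\zeta(x,y)|\,e^{a(y)+2b(y)}\le a(x)$ for almost all $x$. $\mathcal{T}_n$ is the set of trees on vertex set $\{1,\dots,n\}$, products over edges. *)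

theory Defs
  imports "HOL-Analysis.Analysis"
begin

text \<open>Simple graphs on a vertex set of naturals, edges as two-element sets.\<close>

definition adj :: "nat set set \<Rightarrow> (nat \<times> nat) set" where
  "adj E = {(i, j). {i, j} \<in> E}"

text \<open>A tree on V: a simple graph on V which is connected and acyclic
  (acyclic = no edge lies on a cycle, i.e. removing any edge disconnects its endpoints).\<close>

definition is_tree :: "nat set \<Rightarrow> nat set set \<Rightarrow> bool" where
  "is_tree V E \<longleftrightarrow>
     E \<subseteq> {{i, j} | i j. i \<in> V \<and> j \<in> V \<and> i \<noteq> j} \<and>
     (\<forall>i\<in>V. \<forall>j\<in>V. (i, j) \<in> (adj E)\<^sup>*) \<and>
     (\<forall>e\<in>E. \<forall>i j. e = {i, j} \<longrightarrow> (i, j) \<notin> (adj (E - {e}))\<^sup>*)"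

definition trees :: "nat \<Rightarrow> nat set set set" where
  "trees n = {E. is_tree {1..n} E}"

text \<open>K_N(x1): the n-th term integrates over x_2..x_n w.r.t. the product of
  the total variation measure M = |mu|; the vector (x_1,...,x_n) is y(1 := x1).
  Edges {i,j} are evaluated as |zeta(x_min, x_max)| (zeta is symmetric).\<close>

definition K :: "'a measure \<Rightarrow> ('a \<Rightarrow> 'a \<Rightarrow> complex) \<Rightarrow> ('a \<Rightarrow> real) \<Rightarrow> nat \<Rightarrow> 'a \<Rightarrow> ennreal" where
  "K M \<zeta> b N x1 =
     (\<Sum>n = 1..N. ennreal (1 / fact (n - 1)) *
        (\<integral>\<^sup>+ y. ennreal
            ((\<Prod>i = 1..n. exp (2 * b ((y(1 := x1)) i))) *
             (\<Sum>G\<in>trees n. \<Prod>e\<in>G. cmod (\<zeta> ((y(1 := x1)) (Min e)) ((y(1 := x1)) (Max e)))))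
         \<partial>(PiM {2..n} (\<lambda>_. M))))"

end

theory Submission
  imports Defs
begin

text \<open>
  Rooting a tree on \<open>{1..n}\<close> at the vertex \<open>1\<close> turns it into a parent map
  on \<open>{2..n}\<close>, so the tree sum is dominated by a sum over rooted forests encoded by parent
  maps (\<open>forest_weight\<close>). Forests are decomposed by their first generation, the vertices
  attached directly to the roots. Integrating out the positions of the non-root vertices, the
  resulting forest integral is bounded by \<open>forest_mass\<close>, which depends only on the numbers of
  roots and non-root vertices and is defined by the recursion of this decomposition. A
  Kotecky--Preiss type induction on the truncation order shows that the truncated exponential
  generating function of \<open>forest_mass\<close> is bounded by a product majorant \<open>A\<close> whenever
  \<open>\<integral> exp (2 b) |\<zeta>(\<cdot>, x)| A d|\<mu>| \<le> log A(x)\<close>. Assumption 2 provides such a majorant, \<open>A = exp a\<close> almost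
  everywhere, and the theorem follows.
\<close>

section \<open>Rooted forests as parent maps\<close>

text \<open>\<open>forest_maps R S\<close>: parent maps of the rooted forests with roots \<open>R\<close> and non-root vertices
  \<open>S\<close>. Every \<open>s \<in> S\<close> has a parent in \<open>R \<union> S\<close>, and a rank strictly decreasing along parent
  steps excludes cycles, so following parents from any vertex reaches a root.\<close>

definition forest_maps :: "nat set \<Rightarrow> nat set \<Rightarrow> (nat \<Rightarrow> nat) set" where
  "forest_maps R S = {p \<in> S \<rightarrow>\<^sub>E R \<union> S. \<exists>rk::nat \<Rightarrow> nat. \<forall>s\<in>S. rk (p s) < rk s}"

definition forest_weight :: "nat set \<Rightarrow> nat set \<Rightarrow> (nat \<Rightarrow> nat \<Rightarrow> ennreal) \<Rightarrow> ennreal" where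
  "forest_weight R S W = (\<Sum>p\<in>forest_maps R S. \<Prod>s\<in>S. W s (p s))"

lemma finite_forest_maps: "finite R \<Longrightarrow> finite S \<Longrightarrow> finite (forest_maps R S)"
  unfolding forest_maps_def by (rule finite_subset[OF _ finite_PiE[of S "\<lambda>_. R \<union> S"]]) auto

lemma forest_weight_no_vertices: "forest_weight R {} W = 1"
  unfolding forest_weight_def forest_maps_def by simp

text \<open>Without roots there is no forest: the vertex of minimal rank would have no parent.\<close>

lemma forest_maps_no_roots:
  assumes "finite S" "S \<noteq> {}"
  shows "forest_maps {} S = {}"
proof (rule ccontr)
  assume "forest_maps {} S \<noteq> {}"
  then obtain p and rk :: "nat \<Rightarrow> nat" where p: "p \<in> S \<rightarrow>\<^sub>E S" and rk: "\<forall>s\<in>S. rk (p s) < rk s"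
    unfolding forest_maps_def by blast
  have "Min (rk ` S) \<in> rk ` S" using assms by simp
  then obtain s where s: "s \<in> S" "rk s = Min (rk ` S)" by auto
  have "p s \<in> S" using s p by auto
  then have "rk s \<le> rk (p s)" using s assms by simp
  with rk s(1) show False by (meson leD)
qed

lemma forest_weight_no_roots: "finite S \<Longrightarrow> S \<noteq> {} \<Longrightarrow> forest_weight {} S W = 0"
  unfolding forest_weight_def by (simp add: forest_maps_no_roots)

lemma forest_weight_cong:
  assumes "\<And>s t. s \<in> S \<Longrightarrow> t \<in> R \<union> S \<Longrightarrow> W s t = W' s t"
  shows "forest_weight R S W = forest_weight R S W'"
  unfolding forest_weight_def forest_maps_def using assms
  by (intro sum.cong prod.cong refl) (auto simp: PiE_iff)

lemma forest_map_edges_inj: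
  assumes "p \<in> forest_maps R S"
  shows "inj_on (\<lambda>v. {v, p v}) S"
proof (rule inj_onI)
  fix u v assume uv: "u \<in> S" "v \<in> S" and eq: "{u, p u} = {v, p v}"
  obtain rk :: "nat \<Rightarrow> nat" where rk: "\<forall>s\<in>S. rk (p s) < rk s"
    using assms unfolding forest_maps_def by blast
  show "u = v"
  proof (rule ccontr)
    assume "u \<noteq> v"
    with eq have "u = p v" "v = p u" by (auto simp: doubleton_eq_iff)
    then have "rk v < rk u" "rk u < rk v" using rk uv by auto
    then show False by simp
  qed
qed

lemma forest_maps_split:
  assumes p: "p \<in> forest_maps R S" and S1: "S1 = {s\<in>S. p s \<in> R}"
  shows "(restrict p S1, restrict p (S - S1)) \<in> (S1 \<rightarrow>\<^sub>E R) \<times> forest_maps S1 (S - S1)"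
proof -
  obtain rk :: "nat \<Rightarrow> nat" where p_fun: "p \<in> S \<rightarrow>\<^sub>E R \<union> S" and rk: "\<forall>s\<in>S. rk (p s) < rk s"
    using p unfolding forest_maps_def by blast
  have "restrict p (S - S1) \<in> (S - S1) \<rightarrow>\<^sub>E S1 \<union> (S - S1)"
    using p_fun S1 by (auto simp: PiE_iff)
  moreover have "\<forall>s\<in>S - S1. rk (restrict p (S - S1) s) < rk s" using rk by auto
  ultimately show ?thesis using S1 unfolding forest_maps_def by auto
qed

lemma restrict_split_inj: "inj_on (\<lambda>p. (restrict p A, restrict p (S - A))) (S \<rightarrow>\<^sub>E X)"
proof (rule inj_onI)
  fix p p' assume p: "p \<in> S \<rightarrow>\<^sub>E X" "p' \<in> S \<rightarrow>\<^sub>E X"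
    and eq: "(restrict p A, restrict p (S - A)) = (restrict p' A, restrict p' (S - A))"
  show "p = p'"
  proof
    fix s
    show "p s = p' s"
    proof (cases "s \<in> S")
      case False
      then show ?thesis using PiE_arb[OF p(1) False] PiE_arb[OF p(2) False] by simp
    next
      case s: True
      have "restrict p A s = restrict p' A s" "restrict p (S - A) s = restrict p' (S - A) s"
        using eq by (simp_all add: prod_eq_iff)
      then show ?thesis using s by (cases "s \<in> A") simp_all
    qed
  qed
qed

lemma forest_weight_split:
  assumes fin: "finite R" "finite S"
  shows "forest_weight R S W \<le> (\<Sum>S1\<in>Pow S. (\<Prod>s\<in>S1. \<Sum>r\<in>R. W s r) * forest_weight S1 (S - S1) W)"
proof -
  let ?X = "\<lambda>S1. {p \<in> forest_maps R S. {s\<in>S. p s \<in> R} = S1}"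
  let ?split = "\<lambda>S1 p. (restrict p S1, restrict p (S - S1))"
  let ?w = "\<lambda>S1 y. (\<Prod>s\<in>S1. W s (fst y s)) * (\<Prod>s\<in>S - S1. W s (snd y s))"
  have "forest_weight R S W = (\<Sum>S1\<in>Pow S. \<Sum>p\<in>?X S1. \<Prod>s\<in>S. W s (p s))"
    unfolding forest_weight_def using fin by (intro sum.group[symmetric]) (auto simp: finite_forest_maps)
  also have "\<dots> \<le> (\<Sum>S1\<in>Pow S. (\<Prod>s\<in>S1. \<Sum>r\<in>R. W s r) * forest_weight S1 (S - S1) W)"
  proof (rule sum_mono)
    fix S1 assume "S1 \<in> Pow S"
    then have "S1 \<subseteq> S" by simp
    then have S1: "S1 \<subseteq> S" "finite S1" using fin(2) by (auto intro: finite_subset)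
    have inj: "inj_on (?split S1) (?X S1)"
      by (rule inj_on_subset[OF restrict_split_inj]) (auto simp: forest_maps_def)
    have "(\<Sum>p\<in>?X S1. \<Prod>s\<in>S. W s (p s)) = (\<Sum>p\<in>?X S1. ?w S1 (?split S1 p))"
      using prod.subset_diff[OF S1(1) fin(2)] by (intro sum.cong) (auto simp: mult.commute)
    also have "\<dots> = (\<Sum>y\<in>?split S1 ` ?X S1. ?w S1 y)"
      by (simp add: sum.reindex[OF inj])
    also have "\<dots> \<le> (\<Sum>y\<in>(S1 \<rightarrow>\<^sub>E R) \<times> forest_maps S1 (S - S1). ?w S1 y)"
      using forest_maps_split fin S1
      by (intro sum_mono2) (auto simp: finite_forest_maps finite_PiE)
    also have "\<dots> = (\<Sum>q\<in>S1 \<rightarrow>\<^sub>E R. \<Sum>p'\<in>forest_maps S1 (S - S1).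
        (\<Prod>s\<in>S1. W s (q s)) * (\<Prod>s\<in>S - S1. W s (p' s)))"
      by (simp only: sum.cartesian_product split_def)
    also have "\<dots> = (\<Sum>q\<in>S1 \<rightarrow>\<^sub>E R. \<Prod>s\<in>S1. W s (q s)) * forest_weight S1 (S - S1) W"
      by (simp add: forest_weight_def sum_product)
    also have "\<dots> = (\<Prod>s\<in>S1. \<Sum>r\<in>R. W s r) * forest_weight S1 (S - S1) W"
      using S1(2) fin(1) by (simp add: prod_sum_PiE)
    finally show "(\<Sum>p\<in>?X S1. \<Prod>s\<in>S. W s (p s))
        \<le> (\<Prod>s\<in>S1. \<Sum>r\<in>R. W s r) * forest_weight S1 (S - S1) W" .
  qed
  finally show ?thesis .
qed

section \<open>Trees as parent maps\<close>

lemma sym_adj: "sym (adj E)"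
  unfolding adj_def sym_def by (auto simp: insert_commute)

lemma adj_mono: "E \<subseteq> E' \<Longrightarrow> adj E \<subseteq> adj E'"
  unfolding adj_def by auto

locale rooted_tree =
  fixes V :: "nat set" and E :: "nat set set" and r :: nat
  assumes tree: "is_tree V E" and root: "r \<in> V"
begin

lemma edges_in_V: "E \<subseteq> {{i, j} | i j. i \<in> V \<and> j \<in> V \<and> i \<noteq> j}"
  and connected: "\<And>i j. i \<in> V \<Longrightarrow> j \<in> V \<Longrightarrow> (i, j) \<in> (adj E)\<^sup>*"
  and bridges: "\<And>e i j. e \<in> E \<Longrightarrow> e = {i, j} \<Longrightarrow> (i, j) \<notin> (adj (E - {e}))\<^sup>*"
  using tree unfolding is_tree_def by blast+

lemma adj_vertices: "(i, j) \<in> adj E \<Longrightarrow> i \<in> V \<and> j \<in> V \<and> i \<noteq> j"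
  using edges_in_V unfolding adj_def by (auto simp: doubleton_eq_iff)

definition depth :: "nat \<Rightarrow> nat" where
  "depth v = (LEAST k. (v, r) \<in> adj E ^^ k)"

lemma depth_path:
  assumes "v \<in> V"
  shows "(v, r) \<in> adj E ^^ depth v"
proof -
  obtain k where "(v, r) \<in> adj E ^^ k"
    using connected[OF assms root] by (auto simp: rtrancl_power)
  then show ?thesis unfolding depth_def by (rule LeastI)
qed

lemma depth_minimal: "(v, r) \<in> adj E ^^ k \<Longrightarrow> depth v \<le> k"
  unfolding depth_def by (rule Least_le)

lemma depth_zero_iff: "v \<in> V \<Longrightarrow> depth v = 0 \<longleftrightarrow> v = r"
  using depth_path[of v] depth_minimal[of r 0] by (cases "depth v") auto

lemma step_towards_root:
  assumes v: "v \<in> V" "v \<noteq> r"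
  shows "\<exists>u. (v, u) \<in> adj E \<and> Suc (depth u) = depth v"
proof -
  obtain k where k: "depth v = Suc k"
    using depth_zero_iff v not0_implies_Suc by blast
  then obtain u where u: "(v, u) \<in> adj E" "(u, r) \<in> adj E ^^ k"
    using depth_path[OF v(1)] relpow_Suc_D2 by fastforce
  have "depth u \<le> k" using u(2) by (rule depth_minimal)
  moreover have "depth v \<le> Suc (depth u)"
    using adj_vertices[OF u(1)] by (intro depth_minimal relpow_Suc_I2[OF u(1) depth_path]) simp
  ultimately show ?thesis using u(1) k by auto
qed

definition parent :: "nat \<Rightarrow> nat" where
  "parent v = (if v \<in> V - {r} then SOME u. (v, u) \<in> adj E \<and> Suc (depth u) = depth v else undefined)"

lemma parent_step:
  assumes "v \<in> V - {r}"
  shows "(v, parent v) \<in> adj E" and "Suc (depth (parent v)) = depth v"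
  using someI_ex[OF step_towards_root[of v]] assms unfolding parent_def by auto

lemma parent_forest_map: "parent \<in> forest_maps {r} (V - {r})"
  unfolding forest_maps_def
proof (intro CollectI conjI exI[of _ depth] ballI PiE_I)
  fix v assume "v \<in> V - {r}"
  then show "parent v \<in> {r} \<union> (V - {r})" "depth (parent v) < depth v"
    using parent_step[of v] adj_vertices by auto
qed (auto simp: parent_def)

definition parent_edges :: "nat set set" where
  "parent_edges = (\<lambda>v. {v, parent v}) ` (V - {r})"

lemma parent_edges_subset: "parent_edges \<subseteq> E"
  using parent_step(1) unfolding parent_edges_def adj_def by auto

lemma reaches_root_by_parent_edges: "v \<in> V \<Longrightarrow> (v, r) \<in> (adj parent_edges)\<^sup>*"
proof (induction "depth v" arbitrary: v rule: less_induct)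
  case less
  show ?case
  proof (cases "v = r")
    case False
    then have v: "v \<in> V - {r}" using less.prems by simp
    have "(v, parent v) \<in> adj parent_edges"
      using v unfolding parent_edges_def adj_def by auto
    moreover have "(parent v, r) \<in> (adj parent_edges)\<^sup>*"
      using parent_step[OF v] adj_vertices by (intro less.hyps) auto
    ultimately show ?thesis by (rule converse_rtrancl_into_rtrancl)
  qed simp
qed

text \<open>Every edge of the tree is a parent edge: an edge outside the parent edges would not be
  a bridge, since both its endpoints reach the root along parent edges.\<close>

lemma edges_eq_parent_edges: "E = parent_edges"
proof
  show "E \<subseteq> parent_edges"
  proof
    fix e assume e: "e \<in> E"
    then obtain i j where ij: "e = {i, j}" "i \<in> V" "j \<in> V"
      using edges_in_V by blast
    show "e \<in> parent_edges"
    proof (rule ccontr)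
      assume "e \<notin> parent_edges"
      then have "(adj parent_edges)\<^sup>* \<subseteq> (adj (E - {e}))\<^sup>*"
        using parent_edges_subset by (intro rtrancl_mono adj_mono) auto
      then have "(i, r) \<in> (adj (E - {e}))\<^sup>*" "(j, r) \<in> (adj (E - {e}))\<^sup>*"
        using reaches_root_by_parent_edges ij by auto
      then have "(i, j) \<in> (adj (E - {e}))\<^sup>*"
        using symD[OF sym_rtrancl[OF sym_adj]] by (blast intro: rtrancl_trans)
      then show False using bridges e ij by blast
    qed
  qed
qed (rule parent_edges_subset)

end

lemma tree_parent_map:
  assumes "is_tree V E" "r \<in> V"
  shows "\<exists>p\<in>forest_maps {r} (V - {r}). E = (\<lambda>v. {v, p v}) ` (V - {r})"
proof -
  interpret rooted_tree V E r using assms by unfold_locales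
  show ?thesis
    using parent_forest_map edges_eq_parent_edges unfolding parent_edges_def by blast
qed

lemma trees_le_forest_weight:
  fixes f :: "nat set \<Rightarrow> ennreal"
  assumes "n \<ge> 1"
  shows "(\<Sum>G\<in>trees n. \<Prod>e\<in>G. f e) \<le> forest_weight {1} {2..n} (\<lambda>s t. f {s, t})"
proof -
  let ?edges = "\<lambda>p. (\<lambda>v. {v, p v}) ` {2..n}"
  have "{1..n} - {1} = {2..n}" by auto
  then have "trees n \<subseteq> ?edges ` forest_maps {1} {2..n}"
    using tree_parent_map[of "{1..n}" _ 1] assms unfolding trees_def by fastforce
  then have "(\<Sum>G\<in>trees n. \<Prod>e\<in>G. f e) \<le> (\<Sum>G\<in>?edges ` forest_maps {1} {2..n}. \<Prod>e\<in>G. f e)"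
    by (intro sum_mono2) (auto simp: finite_forest_maps)
  also have "\<dots> \<le> (\<Sum>p\<in>forest_maps {1} {2..n}. \<Prod>e\<in>?edges p. f e)"
    using sum_image_le[of "forest_maps {1} {2..n}" "\<lambda>G. \<Prod>e\<in>G. f e" ?edges]
    by (simp add: finite_forest_maps comp_def)
  also have "\<dots> = forest_weight {1} {2..n} (\<lambda>s t. f {s, t})"
    unfolding forest_weight_def
    by (intro sum.cong refl) (simp add: prod.reindex[OF forest_map_edges_inj])
  finally show ?thesis .
qed


section \<open>Summation identities\<close>

text \<open>Reordering the binomial convolution that defines \<open>forest_mass\<close>: a sum over total sizes
  \<open>n\<close> and first-generation sizes \<open>k\<close> becomes a sum over \<open>k\<close> and the remaining size \<open>m = n - k\<close>.\<close>

lemma sum_triangle_swap: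
  fixes g :: "nat \<Rightarrow> nat \<Rightarrow> 'b::comm_monoid_add"
  shows "(\<Sum>n\<in>{1..N}. \<Sum>k\<in>{1..n}. g k (n - k)) = (\<Sum>k\<in>{1..N}. \<Sum>m\<le>N - k. g k m)"
proof (induction N)
  case (Suc N)
  have "(\<Sum>k\<in>{1..Suc N}. \<Sum>m\<le>Suc N - k. g k m)
      = (\<Sum>k\<in>{1..N}. \<Sum>m\<le>Suc N - k. g k m) + g (Suc N) 0"
    by simp
  also have "(\<Sum>k\<in>{1..N}. \<Sum>m\<le>Suc N - k. g k m)
      = (\<Sum>k\<in>{1..N}. (\<Sum>m\<le>N - k. g k m) + g k (Suc N - k))"
    by (intro sum.cong refl) (simp add: Suc_diff_le)
  finally show ?case using Suc by (simp add: sum.distrib add_ac)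
qed simp

lemma binomial_convolution_reorder:
  fixes Q :: "nat \<Rightarrow> nat \<Rightarrow> ennreal"
  shows "(\<Sum>n\<in>{1..N}. ennreal (1 / fact n) * (\<Sum>k\<in>{1..n}. of_nat (n choose k) * Q k (n - k)))
       = (\<Sum>k\<in>{1..N}. ennreal (1 / fact k) * (\<Sum>m\<le>N - k. ennreal (1 / fact m) * Q k m))"
proof -
  have coeff: "ennreal (1 / fact n) * of_nat (n choose k) = ennreal (1 / fact k) * ennreal (1 / fact (n - k))"
    if "k \<le> n" for n k :: nat
  proof -
    have "(1 / fact n) * real (n choose k) = (1 / fact k) * (1 / fact (n - k))"
      using binomial_fact[OF that, where 'a = real] by (simp add: field_simps)
    then show ?thesis
      by (simp add: ennreal_mult[symmetric] ennreal_of_nat_eq_real_of_nat)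
  qed
  have "(\<Sum>n\<in>{1..N}. ennreal (1 / fact n) * (\<Sum>k\<in>{1..n}. of_nat (n choose k) * Q k (n - k)))
      = (\<Sum>n\<in>{1..N}. \<Sum>k\<in>{1..n}. ennreal (1 / fact k) * (ennreal (1 / fact (n - k)) * Q k (n - k)))"
    by (simp add: sum_distrib_left coeff mult.assoc[symmetric])
  also have "\<dots> = (\<Sum>k\<in>{1..N}. ennreal (1 / fact k) * (\<Sum>m\<le>N - k. ennreal (1 / fact m) * Q k m))"
    using sum_triangle_swap[of "\<lambda>k m. ennreal (1 / fact k) * (ennreal (1 / fact m) * Q k m)" N]
    by (simp add: sum_distrib_left)
  finally show ?thesis .
qed

lemma exp_partial_sum_ennreal:
  assumes "\<beta> \<le> ennreal \<alpha>" and "0 \<le> \<alpha>"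
  shows "(\<Sum>k\<le>N. ennreal (1 / fact k) * \<beta> ^ k) \<le> ennreal (exp \<alpha>)"
proof -
  have "(\<Sum>k\<le>N. ennreal (1 / fact k) * \<beta> ^ k) \<le> (\<Sum>k\<le>N. ennreal (1 / fact k) * ennreal \<alpha> ^ k)"
    using assms(1) by (intro sum_mono mult_left_mono power_mono) auto
  also have "\<dots> = ennreal (\<Sum>k\<le>N. \<alpha> ^ k / fact k)"
    using assms(2) by (simp add: ennreal_power ennreal_mult[symmetric] sum_ennreal)
  also have "\<dots> \<le> ennreal (exp \<alpha>)"
  proof (rule ennreal_leI)
    have "(\<Sum>k\<le>N. \<alpha> ^ k / fact k) \<le> (\<Sum>k. \<alpha> ^ k / fact k)"
      using summable_exp[of \<alpha>] assms(2)
      by (intro sum_le_suminf) (auto simp: divide_inverse mult.commute)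
    then show "(\<Sum>k\<le>N. \<alpha> ^ k / fact k) \<le> exp \<alpha>"
      by (simp add: exp_def divide_inverse mult.commute scaleR_conv_of_real)
  qed
  finally show ?thesis .
qed

lemma sum_Pow_by_card:
  fixes g :: "nat \<Rightarrow> 'b::comm_semiring_1"
  assumes "finite S"
  shows "(\<Sum>A\<in>Pow S. g (card A)) = (\<Sum>k\<le>card S. of_nat (card S choose k) * g k)"
proof -
  have "(\<Sum>A\<in>Pow S. g (card A)) = (\<Sum>k\<le>card S. \<Sum>A\<in>{A\<in>Pow S. card A = k}. g (card A))"
    using assms by (intro sum.group[symmetric]) (auto simp: card_mono)
  also have "\<dots> = (\<Sum>k\<le>card S. of_nat (card S choose k) * g k)"
  proof (rule sum.cong[OF refl])
    fix k
    have "{A\<in>Pow S. card A = k} = {A. A \<subseteq> S \<and> card A = k}" by auto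
    then show "(\<Sum>A\<in>{A\<in>Pow S. card A = k}. g (card A)) = of_nat (card S choose k) * g k"
      using n_subsets[OF assms, of k] by simp
  qed
  finally show ?thesis .
qed

section \<open>Integrated forest weights\<close>

locale forest_integrals = sigma_finite_measure M
  for M :: "'a measure" +
  fixes w :: "'a \<Rightarrow> 'a \<Rightarrow> ennreal" and c :: "'a \<Rightarrow> ennreal"
  assumes w_measurable: "(\<lambda>p. w (fst p) (snd p)) \<in> borel_measurable (M \<Otimes>\<^sub>M M)"
    and c_measurable: "c \<in> borel_measurable M"
begin

sublocale product: product_sigma_finite "\<lambda>_::nat. M"
  by (simp add: product_sigma_finite_def sigma_finite_measure_axioms)

lemma w_measurable_comp[measurable]:
  assumes "f \<in> measurable N M" "g \<in> measurable N M"
  shows "(\<lambda>x. w (f x) (g x)) \<in> borel_measurable N"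
  using measurable_comp[OF measurable_Pair[OF assms] w_measurable] by (simp add: comp_def)

lemma c_measurable_comp[measurable]: "f \<in> measurable N M \<Longrightarrow> (\<lambda>x. c (f x)) \<in> borel_measurable N"
  using measurable_comp[OF _ c_measurable] by (simp add: comp_def)

text \<open>Renaming the coordinates of a finite product of copies of \<open>M\<close> along a bijection
  \<open>\<sigma> : I \<rightarrow> S\<close> maps boxes to boxes, hence preserves the product measure.\<close>

lemma PiE_reindex_vimage:
  fixes I S :: "nat set"
  assumes bij: "bij_betw \<sigma> I S" and A: "\<And>i. i \<in> I \<Longrightarrow> A i \<in> sets M"
  shows "(\<lambda>y. \<lambda>i\<in>I. y (\<sigma> i)) -` Pi\<^sub>E I A \<inter> space (PiM S (\<lambda>_. M))
      = Pi\<^sub>E S (\<lambda>s. A (the_inv_into I \<sigma> s))"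
proof -
  let ?rho = "\<lambda>y. \<lambda>i\<in>I. y (\<sigma> i)" and ?inv = "the_inv_into I \<sigma>"
  have inv1: "?inv (\<sigma> i) = i" if "i \<in> I" for i
    using bij that by (auto simp: bij_betw_def the_inv_into_f_f)
  have inv2: "?inv s \<in> I" "\<sigma> (?inv s) = s" if "s \<in> S" for s
    using bij that by (auto simp: bij_betw_def the_inv_into_into f_the_inv_into_f)
  show ?thesis
  proof (intro set_eqI iffI)
    fix y assume y: "y \<in> ?rho -` Pi\<^sub>E I A \<inter> space (PiM S (\<lambda>_. M))"
    show "y \<in> Pi\<^sub>E S (\<lambda>s. A (?inv s))"
    proof (rule PiE_I)
      fix s assume s: "s \<in> S"
      have "?rho y (?inv s) \<in> A (?inv s)" using y inv2[OF s] by (auto simp: PiE_iff)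
      then show "y s \<in> A (?inv s)" using inv2[OF s] by simp
    qed (use y in \<open>auto simp: space_PiM PiE_def extensional_def\<close>)
  next
    fix y assume y: "y \<in> Pi\<^sub>E S (\<lambda>s. A (?inv s))"
    have "?rho y \<in> Pi\<^sub>E I A"
      using y inv1 bij_betw_apply[OF bij] by (auto simp: PiE_iff) (metis)
    moreover have "y \<in> space (PiM S (\<lambda>_. M))"
      using y A inv2 sets.sets_into_space by (fastforce simp: space_PiM PiE_iff)
    ultimately show "y \<in> ?rho -` Pi\<^sub>E I A \<inter> space (PiM S (\<lambda>_. M))" by simp
  qed
qed

lemma distr_PiM_bij_reindex:
  fixes I S :: "nat set"
  assumes I: "finite I" and bij: "bij_betw \<sigma> I S"
  shows "distr (PiM S (\<lambda>_. M)) (PiM I (\<lambda>_. M)) (\<lambda>y. \<lambda>i\<in>I. y (\<sigma> i)) = PiM I (\<lambda>_. M)"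
proof (rule product.PiM_eqI[OF I])
  let ?rho = "\<lambda>y. \<lambda>i\<in>I. y (\<sigma> i)" and ?inv = "the_inv_into I \<sigma>"
  fix A assume A: "\<And>i. i \<in> I \<Longrightarrow> A i \<in> sets M"
  have S: "finite S" using bij I bij_betw_finite by blast
  have rho: "?rho \<in> measurable (PiM S (\<lambda>_. M)) (PiM I (\<lambda>_. M))"
    using bij_betw_apply[OF bij] by (intro measurable_restrict) (auto intro!: measurable_component_singleton)
  have inv: "?inv s \<in> I" if "s \<in> S" for s
    using bij that by (auto simp: bij_betw_def the_inv_into_into)
  have "emeasure (distr (PiM S (\<lambda>_. M)) (PiM I (\<lambda>_. M)) ?rho) (Pi\<^sub>E I A)
      = (\<Prod>s\<in>S. emeasure M (A (?inv s)))"
    using A rho inv S PiE_reindex_vimage[OF bij A]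
    by (simp add: emeasure_distr sets_PiM_I_finite I product.emeasure_PiM)
  also have "\<dots> = (\<Prod>i\<in>I. emeasure M (A i))"
    using prod.reindex_bij_betw[OF bij, of "\<lambda>s. emeasure M (A (?inv s))"] bij
    by (simp add: bij_betw_def the_inv_into_f_f)
  finally show "emeasure (distr (PiM S (\<lambda>_. M)) (PiM I (\<lambda>_. M)) ?rho) (Pi\<^sub>E I A)
      = (\<Prod>i\<in>I. emeasure M (A i))" .
qed simp

lemma nn_integral_PiM_bij_reindex:
  fixes I S :: "nat set"
  assumes "finite I" and bij: "bij_betw \<sigma> I S" and f: "f \<in> borel_measurable (PiM I (\<lambda>_. M))"
  shows "(\<integral>\<^sup>+ y. f (\<lambda>i\<in>I. y (\<sigma> i)) \<partial>PiM S (\<lambda>_. M)) = (\<integral>\<^sup>+ u. f u \<partial>PiM I (\<lambda>_. M))"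
proof -
  let ?rho = "\<lambda>y. \<lambda>i\<in>I. y (\<sigma> i)"
  have "?rho \<in> measurable (PiM S (\<lambda>_. M)) (PiM I (\<lambda>_. M))"
    using bij by (intro measurable_restrict) (auto intro!: measurable_component_singleton simp: bij_betw_def)
  then have "(\<integral>\<^sup>+ y. f (?rho y) \<partial>PiM S (\<lambda>_. M))
      = (\<integral>\<^sup>+ u. f u \<partial>distr (PiM S (\<lambda>_. M)) (PiM I (\<lambda>_. M)) ?rho)"
    using f by (simp add: nn_integral_distr)
  also have "\<dots> = (\<integral>\<^sup>+ u. f u \<partial>PiM I (\<lambda>_. M))"
    by (simp add: distr_PiM_bij_reindex[OF assms(1,2)])
  finally show ?thesis .
qed

text \<open>The weight of a new generation of \<open>k'\<close> vertices at positions \<open>u 0, \<dots>, u (k'-1)\<close>, each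
  attached to one of \<open>k\<close> parents at positions \<open>z 0, \<dots>, z (k-1)\<close>.\<close>

definition generation_weight :: "nat \<Rightarrow> nat \<Rightarrow> (nat \<Rightarrow> 'a) \<Rightarrow> (nat \<Rightarrow> 'a) \<Rightarrow> ennreal" where
  "generation_weight k' k z u = (\<Prod>i<k'. c (u i) * (\<Sum>j<k. w (u i) (z j)))"

text \<open>\<open>forest_mass n k z\<close> is the integrated weight of all forests with \<open>n\<close> non-root vertices
  hanging from \<open>k\<close> roots at positions \<open>z\<close>: choose which \<open>k'\<close> of the \<open>n\<close> vertices form the
  first generation, integrate over their positions, and recurse with them as new roots.\<close>

function forest_mass :: "nat \<Rightarrow> nat \<Rightarrow> (nat \<Rightarrow> 'a) \<Rightarrow> ennreal" where
  "forest_mass n k z = (if n = 0 then 1 else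
     (\<Sum>k'\<in>{1..n}. of_nat (n choose k') *
        (\<integral>\<^sup>+ u. generation_weight k' k z u * forest_mass (n - k') k' u \<partial>PiM {..<k'} (\<lambda>_. M))))"
  by pat_completeness auto
termination by (relation "Wellfounded.measure (\<lambda>(n, k, z). n)") auto

declare forest_mass.simps[simp del]

lemma forest_mass_0[simp]: "forest_mass 0 k z = 1"
  by (simp add: forest_mass.simps)

lemma forest_mass_cong: "(\<And>j. j < k \<Longrightarrow> z j = z' j) \<Longrightarrow> forest_mass n k z = forest_mass n k z'"
  by (subst (1 2) forest_mass.simps) (simp add: generation_weight_def)

lemma generation_weight_measurable:
  assumes "\<And>j. j < k \<Longrightarrow> (\<lambda>x. f x j) \<in> measurable N M"
    and "\<And>i. i < k' \<Longrightarrow> (\<lambda>x. g x i) \<in> measurable N M"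
  shows "(\<lambda>x. generation_weight k' k (f x) (g x)) \<in> borel_measurable N"
  unfolding generation_weight_def using assms
  by (intro borel_measurable_prod_ennreal borel_measurable_times_ennreal borel_measurable_sum
      c_measurable_comp w_measurable_comp) auto

lemma forest_mass_measurable[measurable]: "forest_mass n k \<in> borel_measurable (PiM {..<k} (\<lambda>_. M))"
proof (induction n arbitrary: k rule: less_induct)
  case (less n)
  show ?case
  proof (cases "n = 0")
    case False
    have "(\<lambda>z. \<integral>\<^sup>+ u. generation_weight k' k z u * forest_mass (n - k') k' u \<partial>PiM {..<k'} (\<lambda>_. M))
       \<in> borel_measurable (PiM {..<k} (\<lambda>_. M))" if k': "k' \<in> {1..n}" for k'
    proof -
      interpret S: sigma_finite_measure "PiM {..<k'} (\<lambda>_. M)"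
        by (rule product.sigma_finite) simp
      note [measurable] = less.IH[of "n - k'"]
      have [measurable]: "(\<lambda>(z, u). generation_weight k' k z u)
          \<in> borel_measurable (PiM {..<k} (\<lambda>_. M) \<Otimes>\<^sub>M PiM {..<k'} (\<lambda>_. M))"
        by (simp add: case_prod_beta') (intro generation_weight_measurable; measurable)
      show ?thesis using k' by (intro S.borel_measurable_nn_integral) measurable
    qed
    then show ?thesis using False by (subst forest_mass.simps[abs_def]) simp
  qed simp
qed

lemma generation_weight_measurable_fixed[measurable]:
  "(\<And>j. j < k \<Longrightarrow> z j \<in> space M) \<Longrightarrow> generation_weight k' k z \<in> borel_measurable (PiM {..<k'} (\<lambda>_. M))"
  using generation_weight_measurable[of k "\<lambda>_. z" _ k' "\<lambda>u. u"] by simp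

lemma generation_integral_prod:
  assumes z: "\<And>j. j < k \<Longrightarrow> z j \<in> space M" and A[measurable]: "A \<in> borel_measurable M"
  shows "(\<integral>\<^sup>+ u. generation_weight k' k z u * (\<Prod>i<k'. A (u i)) \<partial>PiM {..<k'} (\<lambda>_. M))
       = (\<integral>\<^sup>+ v. c v * (\<Sum>j<k. w v (z j)) * A v \<partial>M) ^ k'"
proof -
  have [measurable]: "(\<lambda>v. c v * (\<Sum>j<k. w v (z j)) * A v) \<in> borel_measurable M"
    using z by measurable
  have "(\<integral>\<^sup>+ u. generation_weight k' k z u * (\<Prod>i<k'. A (u i)) \<partial>PiM {..<k'} (\<lambda>_. M))
      = (\<integral>\<^sup>+ u. (\<Prod>i<k'. c (u i) * (\<Sum>j<k. w (u i) (z j)) * A (u i)) \<partial>PiM {..<k'} (\<lambda>_. M))"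
    by (simp add: generation_weight_def prod.distrib)
  also have "\<dots> = (\<Prod>i<k'. \<integral>\<^sup>+ v. c v * (\<Sum>j<k. w v (z j)) * A v \<partial>M)"
    by (rule product.product_nn_integral_prod) auto
  finally show ?thesis by simp
qed

lemma forest_mass_series_unfold:
  "(\<Sum>n\<le>N. ennreal (1 / fact n) * forest_mass n k z) = 1 + (\<Sum>k'\<in>{1..N}. ennreal (1 / fact k') *
     (\<Sum>m\<le>N - k'. ennreal (1 / fact m) *
        (\<integral>\<^sup>+ u. generation_weight k' k z u * forest_mass m k' u \<partial>PiM {..<k'} (\<lambda>_. M))))"
proof -
  define Q where "Q k' m = (\<integral>\<^sup>+ u. generation_weight k' k z u * forest_mass m k' u \<partial>PiM {..<k'} (\<lambda>_. M))"
    for k' m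
  have "{..N} = insert 0 {1..N}" by auto
  then have "(\<Sum>n\<le>N. ennreal (1 / fact n) * forest_mass n k z)
      = 1 + (\<Sum>n\<in>{1..N}. ennreal (1 / fact n) * (\<Sum>k'\<in>{1..n}. of_nat (n choose k') * Q k' (n - k')))"
    by (simp add: forest_mass.simps[of _ k z] Q_def)
  also have "\<dots> = 1 + (\<Sum>k'\<in>{1..N}. ennreal (1 / fact k') * (\<Sum>m\<le>N - k'. ennreal (1 / fact m) * Q k' m))"
    by (simp only: binomial_convolution_reorder)
  finally show ?thesis unfolding Q_def .
qed

lemma first_generation_series_le:
  assumes z: "\<And>j. j < k \<Longrightarrow> z j \<in> space M" and A[measurable]: "A \<in> borel_measurable M"
    and IH: "\<And>u. (\<Sum>m\<le>N. ennreal (1 / fact m) * forest_mass m k' u) \<le> (\<Prod>i<k'. A (u i))"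
  shows "(\<Sum>m\<le>N. ennreal (1 / fact m) *
           (\<integral>\<^sup>+ u. generation_weight k' k z u * forest_mass m k' u \<partial>PiM {..<k'} (\<lambda>_. M)))
      \<le> (\<integral>\<^sup>+ v. c v * (\<Sum>j<k. w v (z j)) * A v \<partial>M) ^ k'"
proof -
  have "(\<Sum>m\<le>N. ennreal (1 / fact m) *
           (\<integral>\<^sup>+ u. generation_weight k' k z u * forest_mass m k' u \<partial>PiM {..<k'} (\<lambda>_. M)))
      = (\<integral>\<^sup>+ u. generation_weight k' k z u * (\<Sum>m\<le>N. ennreal (1 / fact m) * forest_mass m k' u)
          \<partial>PiM {..<k'} (\<lambda>_. M))"
    unfolding sum_distrib_left using z
    by (subst nn_integral_sum) (auto simp: nn_integral_cmult[symmetric] ac_simps)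
  also have "\<dots> \<le> (\<integral>\<^sup>+ u. generation_weight k' k z u * (\<Prod>i<k'. A (u i)) \<partial>PiM {..<k'} (\<lambda>_. M))"
    by (intro nn_integral_mono mult_left_mono IH) auto
  also have "\<dots> = (\<integral>\<^sup>+ v. c v * (\<Sum>j<k. w v (z j)) * A v \<partial>M) ^ k'"
    using z A by (rule generation_integral_prod)
  finally show ?thesis .
qed

text \<open>The induction is on the truncation order \<open>N\<close>: by the induction hypothesis each first
  generation of size \<open>k'\<close> contributes \<open>\<beta>\<^sup>k'/k'!\<close>, where \<open>\<beta>\<close> is the attachment integral, and the
  exponential series of \<open>\<beta> \<le> \<Sum>j. log A (z j)\<close> is at most \<open>\<Prod>j. A (z j)\<close>.\<close>

lemma forest_mass_series_le:
  assumes A_meas[measurable]: "A \<in> borel_measurable M"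
    and A_bound: "\<And>x. A x \<noteq> \<infinity> \<Longrightarrow> x \<in> space M \<and>
      (\<exists>\<alpha>\<ge>0. A x = ennreal (exp \<alpha>) \<and> (\<integral>\<^sup>+ v. c v * w v x * A v \<partial>M) \<le> ennreal \<alpha>)"
  shows "(\<Sum>n\<le>N. ennreal (1 / fact n) * forest_mass n k z) \<le> (\<Prod>j<k. A (z j))"
proof (induction N arbitrary: k z rule: less_induct)
  case (less N)
  show ?case
  proof (cases "\<exists>j<k. A (z j) = \<infinity>")
    case True
    have "A x \<noteq> 0" for x
      using A_bound[of x] by (cases "A x = \<infinity>") auto
    then have "(\<Prod>j<k. A (z j)) = \<infinity>"
      using True by (auto simp: ennreal_prod_eq_top)
    then show ?thesis by simp
  next
    case False
    then have "\<forall>j\<in>{..<k}. z j \<in> space M \<and>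
        (\<exists>\<alpha>\<ge>0. A (z j) = ennreal (exp \<alpha>) \<and> (\<integral>\<^sup>+ v. c v * w v (z j) * A v \<partial>M) \<le> ennreal \<alpha>)"
      using A_bound by auto
    then obtain \<alpha> where z: "\<And>j. j < k \<Longrightarrow> z j \<in> space M" and \<alpha>: "\<And>j. j < k \<Longrightarrow> 0 \<le> \<alpha> j \<and>
        A (z j) = ennreal (exp (\<alpha> j)) \<and> (\<integral>\<^sup>+ v. c v * w v (z j) * A v \<partial>M) \<le> ennreal (\<alpha> j)"
      by (metis lessThan_iff bchoice)
    define \<beta> where "\<beta> = (\<integral>\<^sup>+ v. c v * (\<Sum>j<k. w v (z j)) * A v \<partial>M)"
    have "\<beta> = (\<Sum>j<k. \<integral>\<^sup>+ v. c v * w v (z j) * A v \<partial>M)"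
      unfolding \<beta>_def sum_distrib_left sum_distrib_right
      using z by (intro nn_integral_sum) measurable
    also have "\<dots> \<le> (\<Sum>j<k. ennreal (\<alpha> j))"
      using \<alpha> by (intro sum_mono) auto
    also have "\<dots> = ennreal (\<Sum>j<k. \<alpha> j)"
      using \<alpha> by (intro sum_ennreal) auto
    finally have \<beta>_le: "\<beta> \<le> ennreal (\<Sum>j<k. \<alpha> j)" .
    have "(\<Sum>n\<le>N. ennreal (1 / fact n) * forest_mass n k z) = 1 + (\<Sum>k'\<in>{1..N}. ennreal (1 / fact k') *
        (\<Sum>m\<le>N - k'. ennreal (1 / fact m) *
          (\<integral>\<^sup>+ u. generation_weight k' k z u * forest_mass m k' u \<partial>PiM {..<k'} (\<lambda>_. M))))"
      by (rule forest_mass_series_unfold)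
    also have "\<dots> \<le> 1 + (\<Sum>k'\<in>{1..N}. ennreal (1 / fact k') * \<beta> ^ k')"
      unfolding \<beta>_def using z
      by (intro add_left_mono sum_mono mult_left_mono first_generation_series_le less.IH) auto
    also have "\<dots> = (\<Sum>k'\<le>N. ennreal (1 / fact k') * \<beta> ^ k')"
    proof -
      have "{..N} = insert 0 {1..N}" by auto
      then show ?thesis by simp
    qed
    also have "\<dots> \<le> ennreal (exp (\<Sum>j<k. \<alpha> j))"
      using \<beta>_le \<alpha> by (intro exp_partial_sum_ennreal sum_nonneg) auto
    also have "\<dots> = (\<Prod>j<k. A (z j))"
      using \<alpha> by (simp add: exp_sum prod_ennreal)
    finally show ?thesis .
  qed
qed

text \<open>\<open>forest_integral R S x\<close>: the integrated weight of the rooted forests with roots \<open>R\<close>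
  at the fixed positions \<open>x\<close> and non-root vertices \<open>S\<close>, whose positions are integrated out.\<close>

definition forest_integral :: "nat set \<Rightarrow> nat set \<Rightarrow> (nat \<Rightarrow> 'a) \<Rightarrow> ennreal" where
  "forest_integral R S x = (\<integral>\<^sup>+ y. (\<Prod>s\<in>S. c (y s)) *
      forest_weight R S (\<lambda>s t. w (override_on x y S s) (override_on x y S t)) \<partial>PiM S (\<lambda>_. M))"

text \<open>The part of the integrand of \<open>forest_integral R S x\<close> coming from forests whose first
  generation (the vertices attached directly to the roots) is \<open>S1\<close>.\<close>

definition generation_integrand :: "nat set \<Rightarrow> nat set \<Rightarrow> (nat \<Rightarrow> 'a) \<Rightarrow> nat set \<Rightarrow> (nat \<Rightarrow> 'a) \<Rightarrow> ennreal"
  where "generation_integrand R S x S1 y = (\<Prod>s\<in>S. c (y s)) * ((\<Prod>s\<in>S1. \<Sum>r\<in>R. w (y s) (x r)) *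
      forest_weight S1 (S - S1) (\<lambda>s t. w (override_on x y S s) (override_on x y S t)))"

lemma forest_weight_measurable:
  assumes "\<And>i. i \<in> R \<union> S \<Longrightarrow> (\<lambda>y. f y i) \<in> measurable N M"
  shows "(\<lambda>y. forest_weight R S (\<lambda>s t. w (f y s) (f y t))) \<in> borel_measurable N"
  unfolding forest_weight_def
proof (intro borel_measurable_sum borel_measurable_prod_ennreal w_measurable_comp)
  fix p s assume "p \<in> forest_maps R S" "s \<in> S"
  then show "(\<lambda>y. f y s) \<in> measurable N M" "(\<lambda>y. f y (p s)) \<in> measurable N M"
    using assms unfolding forest_maps_def by auto
qed

lemma override_forest_weight_measurable:
  assumes x: "\<forall>r\<in>R. x r \<in> space M" and sub: "R' \<union> S' \<subseteq> R \<union> S"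
  shows "(\<lambda>y. forest_weight R' S' (\<lambda>s t. w (override_on x y S s) (override_on x y S t)))
      \<in> borel_measurable (PiM S (\<lambda>_. M))"
proof (rule forest_weight_measurable)
  fix i assume "i \<in> R' \<union> S'"
  with sub x show "(\<lambda>y. override_on x y S i) \<in> measurable (PiM S (\<lambda>_. M)) M"
    by (cases "i \<in> S") auto
qed

lemma generation_integrand_measurable:
  assumes "\<forall>r\<in>R. x r \<in> space M" and "S1 \<subseteq> S"
  shows "generation_integrand R S x S1 \<in> borel_measurable (PiM S (\<lambda>_. M))"
proof -
  have [measurable]: "(\<lambda>y. forest_weight S1 (S - S1) (\<lambda>s t. w (override_on x y S s) (override_on x y S t)))
      \<in> borel_measurable (PiM S (\<lambda>_. M))"
    using assms by (intro override_forest_weight_measurable) auto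
  show ?thesis
    unfolding generation_integrand_def[abs_def] by measurable (use assms in auto)
qed

lemma forest_integral_le_generations:
  assumes fin: "finite R" "finite S" and disj: "R \<inter> S = {}" and x: "\<forall>r\<in>R. x r \<in> space M"
  shows "forest_integral R S x \<le> (\<Sum>S1\<in>Pow S. \<integral>\<^sup>+ y. generation_integrand R S x S1 y \<partial>PiM S (\<lambda>_. M))"
proof -
  have "forest_integral R S x \<le> (\<integral>\<^sup>+ y. (\<Sum>S1\<in>Pow S. generation_integrand R S x S1 y) \<partial>PiM S (\<lambda>_. M))"
    unfolding forest_integral_def
  proof (rule nn_integral_mono)
    fix y
    let ?W = "\<lambda>s t. w (override_on x y S s) (override_on x y S t)"
    have "forest_weight R S ?W \<le> (\<Sum>S1\<in>Pow S. (\<Prod>s\<in>S1. \<Sum>r\<in>R. ?W s r) * forest_weight S1 (S - S1) ?W)"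
      by (rule forest_weight_split[OF fin])
    also have "\<dots> = (\<Sum>S1\<in>Pow S. (\<Prod>s\<in>S1. \<Sum>r\<in>R. w (y s) (x r)) * forest_weight S1 (S - S1) ?W)"
      using disj by (intro sum.cong refl arg_cong2[where f = "(*)"] prod.cong) (auto simp: override_on_def)
    finally show "(\<Prod>s\<in>S. c (y s)) * forest_weight R S ?W \<le> (\<Sum>S1\<in>Pow S. generation_integrand R S x S1 y)"
      unfolding generation_integrand_def sum_distrib_left[symmetric] by (rule mult_left_mono) simp
  qed
  also have "\<dots> = (\<Sum>S1\<in>Pow S. \<integral>\<^sup>+ y. generation_integrand R S x S1 y \<partial>PiM S (\<lambda>_. M))"
    using x by (intro nn_integral_sum generation_integrand_measurable) auto
  finally show ?thesis .
qed

lemma override_on_merge: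
  assumes "S1 \<subseteq> S"
  shows "override_on x (merge S1 (S - S1) (y1, y2)) S = override_on (override_on x y1 S1) y2 (S - S1)"
  using assms by (auto simp: override_on_def merge_def fun_eq_iff)

lemma generation_integrand_merge:
  assumes S1: "S1 \<subseteq> S" and fin: "finite S"
  shows "generation_integrand R S x S1 (merge S1 (S - S1) (y1, y2))
      = (\<Prod>s\<in>S1. c (y1 s) * (\<Sum>r\<in>R. w (y1 s) (x r))) *
        ((\<Prod>s\<in>S - S1. c (y2 s)) * forest_weight S1 (S - S1)
          (\<lambda>s t. w (override_on (override_on x y1 S1) y2 (S - S1) s)
                    (override_on (override_on x y1 S1) y2 (S - S1) t)))"
proof -
  let ?y = "merge S1 (S - S1) (y1, y2)"
  have "(\<Prod>s\<in>S. c (?y s)) = (\<Prod>s\<in>S1. c (?y s)) * (\<Prod>s\<in>S - S1. c (?y s))"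
    by (subst prod.subset_diff[OF S1 fin]) (rule mult.commute)
  also have "\<dots> = (\<Prod>s\<in>S1. c (y1 s)) * (\<Prod>s\<in>S - S1. c (y2 s))"
    by (intro arg_cong2[where f = "(*)"] prod.cong refl) (auto simp: merge_def)
  finally have "(\<Prod>s\<in>S. c (?y s)) = (\<Prod>s\<in>S1. c (y1 s)) * (\<Prod>s\<in>S - S1. c (y2 s))" .
  moreover have "(\<Prod>s\<in>S1. \<Sum>r\<in>R. w (?y s) (x r)) = (\<Prod>s\<in>S1. \<Sum>r\<in>R. w (y1 s) (x r))"
    by (intro prod.cong refl) (auto simp: merge_def)
  ultimately show ?thesis
    unfolding generation_integrand_def override_on_merge[OF S1] by (simp add: prod.distrib ac_simps)
qed

lemma generation_integral_fubini:
  assumes fin: "finite S" and S1: "S1 \<subseteq> S" and x: "\<forall>r\<in>R. x r \<in> space M"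
  shows "(\<integral>\<^sup>+ y. generation_integrand R S x S1 y \<partial>PiM S (\<lambda>_. M))
      = (\<integral>\<^sup>+ y1. (\<Prod>s\<in>S1. c (y1 s) * (\<Sum>r\<in>R. w (y1 s) (x r))) *
            forest_integral S1 (S - S1) (override_on x y1 S1) \<partial>PiM S1 (\<lambda>_. M))"
proof -
  let ?S' = "S - S1"
  have "finite S1" using S1 fin by (rule finite_subset)
  then have "(\<integral>\<^sup>+ y. generation_integrand R S x S1 y \<partial>PiM S (\<lambda>_. M))
      = (\<integral>\<^sup>+ y1. \<integral>\<^sup>+ y2. generation_integrand R S x S1 (merge S1 ?S' (y1, y2)) \<partial>PiM ?S' (\<lambda>_. M)
          \<partial>PiM S1 (\<lambda>_. M))"
    using product.product_nn_integral_fold[of S1 ?S' "generation_integrand R S x S1"] S1 fin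
      generation_integrand_measurable[OF x S1] by (simp add: Un_absorb1)
  also have "\<dots> = (\<integral>\<^sup>+ y1. (\<Prod>s\<in>S1. c (y1 s) * (\<Sum>r\<in>R. w (y1 s) (x r))) *
            forest_integral S1 ?S' (override_on x y1 S1) \<partial>PiM S1 (\<lambda>_. M))"
  proof (rule nn_integral_cong)
    fix y1 assume "y1 \<in> space (PiM S1 (\<lambda>_. M))"
    then have "\<forall>r\<in>R \<union> S1. override_on x y1 S1 r \<in> space M"
      using x by (auto simp: space_PiM override_on_def)
    then have "(\<lambda>y2. (\<Prod>s\<in>?S'. c (y2 s)) * forest_weight S1 ?S' (\<lambda>s t.
        w (override_on (override_on x y1 S1) y2 ?S' s) (override_on (override_on x y1 S1) y2 ?S' t)))
        \<in> borel_measurable (PiM ?S' (\<lambda>_. M))"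
      using override_forest_weight_measurable[of "R \<union> S1" "override_on x y1 S1" S1 ?S' ?S']
      by measurable auto
    then show "(\<integral>\<^sup>+ y2. generation_integrand R S x S1 (merge S1 ?S' (y1, y2)) \<partial>PiM ?S' (\<lambda>_. M))
        = (\<Prod>s\<in>S1. c (y1 s) * (\<Sum>r\<in>R. w (y1 s) (x r))) * forest_integral S1 ?S' (override_on x y1 S1)"
      unfolding generation_integrand_merge[OF S1 fin] forest_integral_def
      by (rule nn_integral_cmult)
  qed
  finally show ?thesis .
qed

lemma first_generation_integral_le:
  assumes fin: "finite S" and S1: "S1 \<subseteq> S" and x: "\<forall>r\<in>R. x r \<in> space M"
    and \<sigma>: "bij_betw \<sigma> {..<card R} R" and \<sigma>1: "bij_betw \<sigma>1 {..<card S1} S1"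
    and IH: "\<And>x'. \<forall>r\<in>S1. x' r \<in> space M \<Longrightarrow>
      forest_integral S1 (S - S1) x' \<le> forest_mass (card S - card S1) (card S1) (\<lambda>j. x' (\<sigma>1 j))"
  shows "(\<integral>\<^sup>+ y. generation_integrand R S x S1 y \<partial>PiM S (\<lambda>_. M))
      \<le> (\<integral>\<^sup>+ u. generation_weight (card S1) (card R) (\<lambda>j. x (\<sigma> j)) u *
            forest_mass (card S - card S1) (card S1) u \<partial>PiM {..<card S1} (\<lambda>_. M))"
proof -
  let ?k = "card S1" and ?m = "card S - card S1"
  define H where "H y1 = (\<Prod>s\<in>S1. c (y1 s) * (\<Sum>r\<in>R. w (y1 s) (x r)))" for y1
  define f where "f u = generation_weight ?k (card R) (\<lambda>j. x (\<sigma> j)) u * forest_mass ?m ?k u" for u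
  have "x (\<sigma> j) \<in> space M" if "j < card R" for j
    using bij_betw_apply[OF \<sigma>, of j] that x by auto
  then have f_meas: "f \<in> borel_measurable (PiM {..<?k} (\<lambda>_. M))"
    unfolding f_def[abs_def] by measurable
  have "(\<integral>\<^sup>+ y. generation_integrand R S x S1 y \<partial>PiM S (\<lambda>_. M))
      = (\<integral>\<^sup>+ y1. H y1 * forest_integral S1 (S - S1) (override_on x y1 S1) \<partial>PiM S1 (\<lambda>_. M))"
    unfolding H_def using fin S1 x by (rule generation_integral_fubini)
  also have "\<dots> \<le> (\<integral>\<^sup>+ y1. H y1 * forest_mass ?m ?k (\<lambda>j. override_on x y1 S1 (\<sigma>1 j)) \<partial>PiM S1 (\<lambda>_. M))"
  proof (rule nn_integral_mono)
    fix y1 assume "y1 \<in> space (PiM S1 (\<lambda>_. M))"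
    then have "\<forall>r\<in>S1. override_on x y1 S1 r \<in> space M" by (auto simp: space_PiM)
    then show "H y1 * forest_integral S1 (S - S1) (override_on x y1 S1)
        \<le> H y1 * forest_mass ?m ?k (\<lambda>j. override_on x y1 S1 (\<sigma>1 j))"
      by (intro mult_left_mono IH) auto
  qed
  also have "\<dots> = (\<integral>\<^sup>+ y1. f (\<lambda>i\<in>{..<?k}. y1 (\<sigma>1 i)) \<partial>PiM S1 (\<lambda>_. M))"
  proof (rule nn_integral_cong)
    fix y1
    have "H y1 = (\<Prod>i<?k. c (y1 (\<sigma>1 i)) * (\<Sum>j<card R. w (y1 (\<sigma>1 i)) (x (\<sigma> j))))"
      unfolding H_def prod.reindex_bij_betw[OF \<sigma>1, symmetric] sum.reindex_bij_betw[OF \<sigma>, symmetric] ..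
    moreover have "forest_mass ?m ?k (\<lambda>j. override_on x y1 S1 (\<sigma>1 j))
        = forest_mass ?m ?k (\<lambda>i\<in>{..<?k}. y1 (\<sigma>1 i))"
      using bij_betw_apply[OF \<sigma>1] by (intro forest_mass_cong) auto
    ultimately show "H y1 * forest_mass ?m ?k (\<lambda>j. override_on x y1 S1 (\<sigma>1 j))
        = f (\<lambda>i\<in>{..<?k}. y1 (\<sigma>1 i))"
      by (simp add: f_def generation_weight_def)
  qed
  also have "\<dots> = (\<integral>\<^sup>+ u. f u \<partial>PiM {..<?k} (\<lambda>_. M))"
    using \<sigma>1 f_meas by (intro nn_integral_PiM_bij_reindex) auto
  finally show ?thesis unfolding f_def .
qed

lemma forest_mass_by_subsets:
  assumes fin: "finite S" and ne: "S \<noteq> {}"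
  shows "forest_mass (card S) k z = (\<Sum>S1\<in>Pow S. if card S1 = 0 then 0 else
      \<integral>\<^sup>+ u. generation_weight (card S1) k z u * forest_mass (card S - card S1) (card S1) u
        \<partial>PiM {..<card S1} (\<lambda>_. M))"
proof -
  define Q where "Q k' = (\<integral>\<^sup>+ u. generation_weight k' k z u * forest_mass (card S - k') k' u
      \<partial>PiM {..<k'} (\<lambda>_. M))" for k'
  have "{..card S} = insert 0 {1..card S}" by auto
  then have "(\<Sum>k'\<le>card S. of_nat (card S choose k') * (if k' = 0 then 0 else Q k'))
      = (\<Sum>k'\<in>{1..card S}. of_nat (card S choose k') * (if k' = 0 then 0 else Q k'))"
    by simp
  also have "\<dots> = forest_mass (card S) k z"
    using fin ne by (subst forest_mass.simps) (auto simp: Q_def intro!: sum.cong)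
  finally have "(\<Sum>S1\<in>Pow S. if card S1 = 0 then 0 else Q (card S1)) = forest_mass (card S) k z"
    using sum_Pow_by_card[OF fin, of "\<lambda>k'. if k' = 0 then 0 else Q k'"] by simp
  then show ?thesis unfolding Q_def by (rule sym)
qed

lemma forest_integral_le_forest_mass:
  assumes "finite S" "finite R" "R \<inter> S = {}" "bij_betw \<sigma> {..<card R} R" "\<forall>r\<in>R. x r \<in> space M"
  shows "forest_integral R S x \<le> forest_mass (card S) (card R) (\<lambda>j. x (\<sigma> j))"
  using assms
proof (induction "card S" arbitrary: S R x \<sigma> rule: less_induct)
  case (less S R x \<sigma>)
  note finS = less.prems(1) and finR = less.prems(2) and disj = less.prems(3)
    and \<sigma> = less.prems(4) and x = less.prems(5)
  show ?case
  proof (cases "S = {}")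
    case True
    then show ?thesis
      by (simp add: forest_integral_def forest_weight_no_vertices PiM_empty)
  next
    case False
    have first_generation: "(\<integral>\<^sup>+ y. generation_integrand R S x S1 y \<partial>PiM S (\<lambda>_. M))
        \<le> (if card S1 = 0 then 0 else \<integral>\<^sup>+ u. generation_weight (card S1) (card R) (\<lambda>j. x (\<sigma> j)) u *
              forest_mass (card S - card S1) (card S1) u \<partial>PiM {..<card S1} (\<lambda>_. M))"
      if "S1 \<in> Pow S" for S1
    proof (cases "S1 = {}")
      case True
      then show ?thesis
        using finS False by (simp add: generation_integrand_def forest_weight_no_roots)
    next
      case S1_ne: False
      have S1: "S1 \<subseteq> S" using that by simp
      then have fin1: "finite S1" using finS by (rule finite_subset)
      obtain \<sigma>1 where \<sigma>1: "bij_betw \<sigma>1 {..<card S1} S1"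
        using ex_bij_betw_nat_finite[OF fin1] unfolding atLeast0LessThan by blast
      have "card (S - S1) < card S"
        using S1 S1_ne finS by (intro psubset_card_mono) blast+
      then have "forest_integral S1 (S - S1) x' \<le> forest_mass (card S - card S1) (card S1) (\<lambda>j. x' (\<sigma>1 j))"
        if "\<forall>r\<in>S1. x' r \<in> space M" for x'
        using less.hyps[of "S - S1" S1 \<sigma>1 x'] that finS fin1 \<sigma>1 card_Diff_subset[OF fin1 S1] by simp
      then show ?thesis
        using first_generation_integral_le[OF finS S1 x \<sigma> \<sigma>1] fin1 S1_ne by simp
    qed
    have "forest_integral R S x \<le> (\<Sum>S1\<in>Pow S. \<integral>\<^sup>+ y. generation_integrand R S x S1 y \<partial>PiM S (\<lambda>_. M))"
      using finR finS disj x by (rule forest_integral_le_generations)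
    also have "\<dots> \<le> forest_mass (card S) (card R) (\<lambda>j. x (\<sigma> j))"
      unfolding forest_mass_by_subsets[OF finS False] using first_generation by (rule sum_mono)
    finally show ?thesis .
  qed
qed

text \<open>A single term of the tree sum: vertex \<open>1\<close> at \<open>x1\<close>, the other vertices integrated. Rooting
  the trees at \<open>1\<close> bounds it by the forest integral with one root.\<close>

lemma tree_integral_le:
  assumes w_sym: "\<And>u v. w u v = w v u" and x1: "x1 \<in> space M" and n: "1 \<le> n"
  shows "(\<integral>\<^sup>+ y. (\<Prod>i = 1..n. c ((y(1 := x1)) i)) *
            (\<Sum>G\<in>trees n. \<Prod>e\<in>G. w ((y(1 := x1)) (Min e)) ((y(1 := x1)) (Max e))) \<partial>PiM {2..n} (\<lambda>_. M))
      \<le> c x1 * forest_mass (n - 1) 1 (\<lambda>_. x1)"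
proof -
  let ?S = "{2..n}" and ?x = "\<lambda>_::nat. x1"
  let ?W = "\<lambda>y s t. w (override_on ?x y ?S s) (override_on ?x y ?S t)"
  have "(\<integral>\<^sup>+ y. (\<Prod>i = 1..n. c ((y(1 := x1)) i)) *
            (\<Sum>G\<in>trees n. \<Prod>e\<in>G. w ((y(1 := x1)) (Min e)) ((y(1 := x1)) (Max e))) \<partial>PiM ?S (\<lambda>_. M))
      \<le> (\<integral>\<^sup>+ y. c x1 * ((\<Prod>s\<in>?S. c (y s)) * forest_weight {1} ?S (?W y)) \<partial>PiM ?S (\<lambda>_. M))"
  proof (rule nn_integral_mono)
    fix y :: "nat \<Rightarrow> 'a"
    let ?z = "y(1 := x1)"
    have "{1..n} = insert 1 ?S" using n by auto
    then have vertices: "(\<Prod>i = 1..n. c (?z i)) = c x1 * (\<Prod>s\<in>?S. c (y s))"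
      by simp
    have "forest_weight {1} ?S (\<lambda>s t. w (?z (Min {s, t})) (?z (Max {s, t}))) = forest_weight {1} ?S (?W y)"
    proof (rule forest_weight_cong)
      fix s t assume "s \<in> ?S" "t \<in> {1} \<union> ?S"
      then show "w (?z (Min {s, t})) (?z (Max {s, t})) = ?W y s t"
        using w_sym by (cases "s \<le> t") (auto simp: override_on_def min_def max_def)
    qed
    then have "(\<Sum>G\<in>trees n. \<Prod>e\<in>G. w (?z (Min e)) (?z (Max e))) \<le> forest_weight {1} ?S (?W y)"
      using trees_le_forest_weight[OF n, of "\<lambda>e. w (?z (Min e)) (?z (Max e))"] by simp
    then show "(\<Prod>i = 1..n. c (?z i)) * (\<Sum>G\<in>trees n. \<Prod>e\<in>G. w (?z (Min e)) (?z (Max e)))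
        \<le> c x1 * ((\<Prod>s\<in>?S. c (y s)) * forest_weight {1} ?S (?W y))"
      unfolding vertices mult.assoc by (intro mult_left_mono) auto
  qed
  also have "\<dots> = c x1 * forest_integral {1} ?S ?x"
  proof -
    have "(\<lambda>y. forest_weight {1} ?S (?W y)) \<in> borel_measurable (PiM ?S (\<lambda>_. M))"
      using x1 by (intro override_forest_weight_measurable) auto
    then show ?thesis
      unfolding forest_integral_def by (intro nn_integral_cmult) measurable
  qed
  also have "\<dots> \<le> c x1 * forest_mass (card ?S) (card {1::nat}) (\<lambda>_. x1)"
  proof -
    have "bij_betw (\<lambda>_. 1::nat) {..<card {1::nat}} {1}"
      by (simp add: bij_betw_def lessThan_Suc)
    then show ?thesis
      using x1 by (intro mult_left_mono forest_integral_le_forest_mass) auto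
  qed
  finally show ?thesis by simp
qed

lemma tree_series_le:
  assumes w_sym: "\<And>u v. w u v = w v u" and x1: "x1 \<in> space M" and N: "1 \<le> N"
  shows "(\<Sum>n = 1..N. ennreal (1 / fact (n - 1)) *
           (\<integral>\<^sup>+ y. (\<Prod>i = 1..n. c ((y(1 := x1)) i)) *
              (\<Sum>G\<in>trees n. \<Prod>e\<in>G. w ((y(1 := x1)) (Min e)) ((y(1 := x1)) (Max e))) \<partial>PiM {2..n} (\<lambda>_. M)))
      \<le> c x1 * (\<Sum>m\<le>N - 1. ennreal (1 / fact m) * forest_mass m 1 (\<lambda>_. x1))"
proof -
  have "(\<Sum>n = 1..N. ennreal (1 / fact (n - 1)) *
           (\<integral>\<^sup>+ y. (\<Prod>i = 1..n. c ((y(1 := x1)) i)) *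
              (\<Sum>G\<in>trees n. \<Prod>e\<in>G. w ((y(1 := x1)) (Min e)) ((y(1 := x1)) (Max e))) \<partial>PiM {2..n} (\<lambda>_. M)))
      \<le> (\<Sum>n = 1..N. ennreal (1 / fact (n - 1)) * (c x1 * forest_mass (n - 1) 1 (\<lambda>_. x1)))"
    using w_sym x1 by (intro sum_mono mult_left_mono tree_integral_le) auto
  also have "\<dots> = (\<Sum>m<N. ennreal (1 / fact m) * (c x1 * forest_mass m 1 (\<lambda>_. x1)))"
    by (simp add: sum.atLeast1_atMost_eq)
  also have "\<dots> = c x1 * (\<Sum>m\<le>N - 1. ennreal (1 / fact m) * forest_mass m 1 (\<lambda>_. x1))"
  proof -
    have "{..<N} = {..N - 1}" using N by auto
    then show ?thesis by (simp add: sum_distrib_left ac_simps)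
  qed
  finally show ?thesis .
qed

end


text \<open>Assumption 2 provides a majorant \<open>A = exp a\<close> almost everywhere; setting \<open>A = \<infinity>\<close> on the
  exceptional null set makes the majorant inequality hold everywhere.\<close>

lemma majorant_from_assumption2:
  fixes M :: "'a measure" and \<zeta> :: "'a \<Rightarrow> 'a \<Rightarrow> complex" and a b :: "'a \<Rightarrow> real"
  assumes \<zeta>_sym: "\<And>x y. \<zeta> x y = \<zeta> y x"
    and a_meas: "a \<in> borel_measurable M" and a_nonneg: "\<And>x. a x \<ge> 0"
    and assumption2: "AE x in M. (\<integral>\<^sup>+ y. ennreal (cmod (\<zeta> x y) * exp (a y + 2 * b y)) \<partial>M) \<le> ennreal (a x)"
  obtains A where "A \<in> borel_measurable M"
    and "\<And>x. A x \<noteq> \<infinity> \<Longrightarrow> x \<in> space M \<and> (\<exists>\<alpha>\<ge>0. A x = ennreal (exp \<alpha>) \<and>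
      (\<integral>\<^sup>+ v. ennreal (exp (2 * b v)) * ennreal (cmod (\<zeta> v x)) * A v \<partial>M) \<le> ennreal \<alpha>)"
    and "AE x in M. A x = ennreal (exp (a x))"
proof -
  from assumption2 obtain N where N: "N \<in> null_sets M"
    and bound: "\<And>x. x \<in> space M - N \<Longrightarrow>
      (\<integral>\<^sup>+ y. ennreal (cmod (\<zeta> x y) * exp (a y + 2 * b y)) \<partial>M) \<le> ennreal (a x)"
    by (rule AE_E3) blast
  define A where "A x = (if x \<in> space M - N then ennreal (exp (a x)) else \<infinity>)" for x
  have AE_good: "AE x in M. x \<in> space M - N"
    using AE_not_in[OF N] by (auto elim: AE_mp)
  have [measurable]: "N \<in> sets M" using N by (rule null_setsD2)
  have "A \<in> borel_measurable M"
    unfolding A_def using a_meas by measurable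
  moreover have "x \<in> space M \<and> (\<exists>\<alpha>\<ge>0. A x = ennreal (exp \<alpha>) \<and>
      (\<integral>\<^sup>+ v. ennreal (exp (2 * b v)) * ennreal (cmod (\<zeta> v x)) * A v \<partial>M) \<le> ennreal \<alpha>)"
    if "A x \<noteq> \<infinity>" for x
  proof -
    have x: "x \<in> space M - N" using that by (auto simp: A_def split: if_splits)
    have "(\<integral>\<^sup>+ v. ennreal (exp (2 * b v)) * ennreal (cmod (\<zeta> v x)) * A v \<partial>M)
        = (\<integral>\<^sup>+ v. ennreal (cmod (\<zeta> x v) * exp (a v + 2 * b v)) \<partial>M)"
      using AE_good
      by (intro nn_integral_cong_AE) (auto simp: A_def \<zeta>_sym[of x] ennreal_mult[symmetric] exp_add mult_ac)
    also have "\<dots> \<le> ennreal (a x)" using bound x by blast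
    finally show ?thesis using x a_nonneg[of x] by (auto simp: A_def)
  qed
  moreover have "AE x in M. A x = ennreal (exp (a x))"
    using AE_good by (auto simp: A_def elim: AE_mp)
  ultimately show thesis by (rule that)
qed

lemma K_ennreal:
  "K M \<zeta> b N x1 = (\<Sum>n = 1..N. ennreal (1 / fact (n - 1)) *
     (\<integral>\<^sup>+ y. (\<Prod>i = 1..n. ennreal (exp (2 * b ((y(1 := x1)) i)))) *
        (\<Sum>G\<in>trees n. \<Prod>e\<in>G. ennreal (cmod (\<zeta> ((y(1 := x1)) (Min e)) ((y(1 := x1)) (Max e)))))
      \<partial>PiM {2..n} (\<lambda>_. M)))"
  unfolding K_def
  by (intro sum.cong arg_cong2[where f = "(*)"] nn_integral_cong refl)
    (simp add: ennreal_mult prod_nonneg sum_nonneg prod_ennreal sum_ennreal)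

lemma forest_integrals_tree_weights:
  assumes "finite_measure M" and \<zeta>_meas: "(\<lambda>(x, y). \<zeta> x y) \<in> borel_measurable (M \<Otimes>\<^sub>M M)"
    and b_meas: "b \<in> borel_measurable M"
  shows "forest_integrals M (\<lambda>u v. ennreal (cmod (\<zeta> u v))) (\<lambda>u. ennreal (exp (2 * b u)))"
proof -
  interpret finite_measure M by (rule assms(1))
  have [measurable]: "(\<lambda>p. \<zeta> (fst p) (snd p)) \<in> borel_measurable (M \<Otimes>\<^sub>M M)"
    using \<zeta>_meas by (simp add: case_prod_beta')
  note [measurable] = b_meas
  show ?thesis
    by unfold_locales measurable
qed

theorem mainTheorem9:
  fixes M :: "'a measure" and \<zeta> :: "'a \<Rightarrow> 'a \<Rightarrow> complex" and a b :: "'a \<Rightarrow> real" and N :: nat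
  assumes tv: "finite_measure M"
    and \<zeta>_meas: "(\<lambda>(x, y). \<zeta> x y) \<in> borel_measurable (M \<Otimes>\<^sub>M M)"
    and \<zeta>_sym: "\<And>x y. \<zeta> x y = \<zeta> y x"
    and b_meas: "b \<in> borel_measurable M" and b_nonneg: "\<And>x. b x \<ge> 0"
    and a_meas: "a \<in> borel_measurable M" and a_nonneg: "\<And>x. a x \<ge> 0"
    and assumption2: "AE x in M. (\<integral>\<^sup>+ y. ennreal (cmod (\<zeta> x y) * exp (a y + 2 * b y)) \<partial>M) \<le> ennreal (a x)"
    and N: "N \<ge> 1"
  shows "AE x in M. K M \<zeta> b N x \<le> ennreal (exp (a x + 2 * b x))"
proof -
  define w where "w u v = ennreal (cmod (\<zeta> u v))" for u v
  define c where "c u = ennreal (exp (2 * b u))" for u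
  interpret forest_integrals M w c
    unfolding w_def c_def using tv \<zeta>_meas b_meas by (rule forest_integrals_tree_weights)
  obtain A where A_meas: "A \<in> borel_measurable M" and A_bound: "\<And>x. A x \<noteq> \<infinity> \<Longrightarrow> x \<in> space M \<and>
      (\<exists>\<alpha>\<ge>0. A x = ennreal (exp \<alpha>) \<and> (\<integral>\<^sup>+ v. c v * w v x * A v \<partial>M) \<le> ennreal \<alpha>)"
    and A_ae: "AE x in M. A x = ennreal (exp (a x))"
    unfolding c_def w_def by (rule majorant_from_assumption2[OF \<zeta>_sym a_meas a_nonneg assumption2]) blast
  show ?thesis
    using A_ae
  proof (rule eventually_mono)
    fix x assume Ax: "A x = ennreal (exp (a x))"
    then have x: "x \<in> space M" using A_bound by auto
    have "K M \<zeta> b N x \<le> c x * (\<Sum>m\<le>N - 1. ennreal (1 / fact m) * forest_mass m 1 (\<lambda>_. x))"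
      unfolding K_ennreal using tree_series_le[OF _ x N] \<zeta>_sym by (simp add: w_def c_def)
    also have "\<dots> \<le> c x * A x"
      using forest_mass_series_le[OF A_meas A_bound, where N = "N - 1" and k = 1 and z = "\<lambda>_. x"] by (intro mult_left_mono) auto
    also have "\<dots> = ennreal (exp (a x + 2 * b x))"
      using Ax by (simp add: c_def exp_add ennreal_mult[symmetric] mult.commute)
    finally show "K M \<zeta> b N x \<le> ennreal (exp (a x + 2 * b x))" .
  qed
qed

end
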